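(* Let $\Theta=\Theta(t)$ be a solution of the Kuramoto model with coupling strength $\kappa>0$, and let $\mathcal{I}$ be a time interval on which $R(t):=R(\Theta(t))>0$, with $\phi(t)$ a smooth branch of the phase order parameter on $\mathcal{I}$. Define $$\Delta(t):=\frac1N\sum_{k=1}^N\sin^2(\theta_k(t)-\phi(t)),\qquad t\in\mathcal{I}.$$ Then $$\dot R(t)\ \ge\ \kappa\sqrt{\Delta(t)}\left(R(t)\sqrt{\Delta(t)}-\frac{D(\Omega)}{2\kappa}\right),\qquad t\in\mathcal{I}.$$
   Context: Kuramoto model: for $N\ge 2$, natural frequencies $\Omega=(\nu_1,\dots,\nu_N)\in\mathbb{R}^N$ and coupling strength $\kappa$, the phases $\Theta(t)=(\theta_1(t),\dots,\theta_N(t))\in\mathbb{R}^N$ satisfy $\dot\theta_i=\nu_i+\frac{\kappa}{N}\sum_{j=1}^N\sin(\theta_j-\theta_i)$, $1\le i\le N$. $D(\Omega):=\max_{i,j}|\nu_i-\nu_j|$. The order parameters $R(\Theta)\in[0,1]$ and $\phi(\Theta)$ (defined mod $2\pi$ when $R>0$) are given by $R(\Theta)e^{\mathrm{i}\phi(\Theta)}=\frac1N\sum_{j=1}^Ne^{\mathrm{i}\theta_j}$. *)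

theory Defs
  imports "HOL-Analysis.Analysis"
begin

text \<open>Phases are indexed by 0..N-1: a configuration is a function nat => real,
  of which only the values at indices below N matter.\<close>

definition kuramoto_solution ::
  "nat \<Rightarrow> (nat \<Rightarrow> real) \<Rightarrow> real \<Rightarrow> (real \<Rightarrow> nat \<Rightarrow> real) \<Rightarrow> bool" where
  "kuramoto_solution N \<nu> \<kappa> \<Theta> \<longleftrightarrow>
     (\<forall>i<N. \<forall>t. ((\<lambda>s. \<Theta> s i) has_real_derivative
        (\<nu> i + \<kappa> / real N * (\<Sum>j<N. sin (\<Theta> t j - \<Theta> t i)))) (at t))"

definition order_param :: "nat \<Rightarrow> (nat \<Rightarrow> real) \<Rightarrow> complex" where
  "order_param N \<theta> = (1 / of_nat N) * (\<Sum>j<N. cis (\<theta> j))"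

definition order_R :: "nat \<Rightarrow> (nat \<Rightarrow> real) \<Rightarrow> real" where
  "order_R N \<theta> = cmod (order_param N \<theta>)"

definition freq_diam :: "nat \<Rightarrow> (nat \<Rightarrow> real) \<Rightarrow> real" where
  "freq_diam N \<nu> = Max {\<bar>\<nu> i - \<nu> j\<bar> | i j. i < N \<and> j < N}"

end

theory Submission
  imports Defs
begin

(* Write s_k = sin (theta_k - phi). Differentiating R = |(1/N) sum_j exp (i theta_j)| gives
   R' = -(1/N) sum_k theta_k' s_k, and the mean-field form of the coupling,
   theta_k' = nu_k - kappa R s_k, turns this into R' = kappa R Delta - (1/N) sum_k nu_k s_k.
   Since sum_k s_k = Im (exp (-i phi) sum_k exp (i theta_k)) = 0, the frequencies may be shifted
   to the midpoint of their range, so the last term is at most (D/2) (1/N) sum_k |s_k|, which is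
   at most (D/2) sqrt Delta by the Cauchy-Schwarz inequality. *)

lemma mean_abs_le_root_mean_square:
  fixes f :: "'a \<Rightarrow> real"
  assumes "finite A" "A \<noteq> {}"
  shows "(\<Sum>i\<in>A. \<bar>f i\<bar>) / card A \<le> sqrt ((\<Sum>i\<in>A. (f i)\<^sup>2) / card A)"
proof -
  have "((\<Sum>i\<in>A. \<bar>f i\<bar>) / card A)\<^sup>2 \<le> (\<Sum>i\<in>A. (f i)\<^sup>2) / card A"
    using sum_squared_le_sum_of_squares[of "\<lambda>i. \<bar>f i\<bar>" A] assms
    by (simp add: power_divide divide_simps power2_eq_square)
  then show ?thesis
    by (simp add: real_le_rsqrt sum_nonneg)
qed

lemma sum_mult_le_of_sum_eq_0:
  fixes a \<sigma> :: "'a \<Rightarrow> real"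
  assumes "(\<Sum>i\<in>A. \<sigma> i) = 0" and "\<And>i. i \<in> A \<Longrightarrow> \<bar>a i - m\<bar> \<le> r"
  shows "(\<Sum>i\<in>A. a i * \<sigma> i) \<le> r * (\<Sum>i\<in>A. \<bar>\<sigma> i\<bar>)"
proof -
  have "(\<Sum>i\<in>A. a i * \<sigma> i) = (\<Sum>i\<in>A. (a i - m) * \<sigma> i)"
    using assms(1) by (simp add: algebra_simps sum_subtractf flip: sum_distrib_left)
  also have "\<dots> \<le> (\<Sum>i\<in>A. r * \<bar>\<sigma> i\<bar>)"
  proof (rule sum_mono)
    fix i assume "i \<in> A"
    have "(a i - m) * \<sigma> i \<le> \<bar>a i - m\<bar> * \<bar>\<sigma> i\<bar>"
      by (metis abs_ge_self abs_mult)
    also have "\<dots> \<le> r * \<bar>\<sigma> i\<bar>"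
      using assms(2)[OF \<open>i \<in> A\<close>] by (simp add: mult_right_mono)
    finally show "(a i - m) * \<sigma> i \<le> r * \<bar>\<sigma> i\<bar>" .
  qed
  finally show ?thesis by (simp add: sum_distrib_left)
qed

lemma freq_diam_centered:
  assumes "N > 0"
  obtains m where "\<And>j. j < N \<Longrightarrow> \<bar>\<nu> j - m\<bar> \<le> freq_diam N \<nu> / 2"
proof -
  define a where "a = Max (\<nu> ` {..<N})"
  define b where "b = Min (\<nu> ` {..<N})"
  have "a \<in> \<nu> ` {..<N}" "b \<in> \<nu> ` {..<N}"
    unfolding a_def b_def using assms by (auto intro!: Max_in Min_in)
  then obtain i k where ik: "i < N" "k < N" "\<nu> i = a" "\<nu> k = b" by blast
  have "finite {\<bar>\<nu> i - \<nu> j\<bar> | i j. i < N \<and> j < N}"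
    by (rule finite_subset[of _ "(\<lambda>(i, j). \<bar>\<nu> i - \<nu> j\<bar>) ` ({..<N} \<times> {..<N})"]) auto
  then have "\<bar>\<nu> i - \<nu> k\<bar> \<le> freq_diam N \<nu>"
    unfolding freq_diam_def by (rule Max_ge) (use ik(1,2) in blast)
  then have diam: "a - b \<le> freq_diam N \<nu>"
    using ik(3,4) by linarith
  show ?thesis
  proof (rule that[of "(a + b) / 2"])
    fix j assume "j < N"
    then have "b \<le> \<nu> j" "\<nu> j \<le> a"
      unfolding a_def b_def by auto
    with diam show "\<bar>\<nu> j - (a + b) / 2\<bar> \<le> freq_diam N \<nu> / 2"
      by (simp add: abs_le_iff field_simps)
  qed
qed

lemma Re_order_param: "Re (order_param N \<theta>) = (\<Sum>j<N. cos (\<theta> j)) / N"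
  by (simp add: order_param_def)

lemma Im_order_param: "Im (order_param N \<theta>) = (\<Sum>j<N. sin (\<theta> j)) / N"
  by (simp add: order_param_def)

lemma sum_sin_diff_order_phase:
  assumes "N > 0" and "order_param N \<theta> = complex_of_real R * cis \<phi>"
  shows "(\<Sum>j<N. sin (\<theta> j - \<psi>)) = N * R * sin (\<phi> - \<psi>)"
proof -
  have "(\<Sum>j<N. cos (\<theta> j)) = N * R * cos \<phi>" "(\<Sum>j<N. sin (\<theta> j)) = N * R * sin \<phi>"
    using arg_cong[OF assms(2), of Re] arg_cong[OF assms(2), of Im] assms(1)
    by (simp_all add: Re_order_param Im_order_param field_simps)
  then show ?thesis
    by (simp add: sin_diff sum_subtractf algebra_simps flip: sum_distrib_left sum_distrib_right)
qed

lemma order_R_has_real_derivative: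
  assumes "N > 0"
    and deriv: "\<And>j. j < N \<Longrightarrow> ((\<lambda>s. \<Theta> s j) has_real_derivative d j) (at t)"
    and polar: "order_param N (\<Theta> t) = complex_of_real R * cis \<phi>" and "R > 0"
  shows "((\<lambda>s. order_R N (\<Theta> s)) has_real_derivative
      - (\<Sum>j<N. d j * sin (\<Theta> t j - \<phi>)) / N) (at t)"
proof -
  define X where "X s = Re (order_param N (\<Theta> s))" for s
  define Y where "Y s = Im (order_param N (\<Theta> s))" for s
  define X' where "X' = (\<Sum>j<N. - sin (\<Theta> t j) * d j) / N"
  define Y' where "Y' = (\<Sum>j<N. cos (\<Theta> t j) * d j) / N"
  have dX: "(X has_real_derivative X') (at t)"
    unfolding X_def[abs_def] X'_def Re_order_param
    using \<open>N > 0\<close> by (intro derivative_eq_intros DERIV_sum) (auto intro: deriv)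
  have dY: "(Y has_real_derivative Y') (at t)"
    unfolding Y_def[abs_def] Y'_def Im_order_param
    using \<open>N > 0\<close> by (intro derivative_eq_intros DERIV_sum) (auto intro: deriv)
  have XYt: "X t = R * cos \<phi>" "Y t = R * sin \<phi>"
    using polar by (simp_all add: X_def Y_def)
  then have normt: "sqrt ((X t)\<^sup>2 + (Y t)\<^sup>2) = R" and pos: "(X t)\<^sup>2 + (Y t)\<^sup>2 > 0"
    using \<open>R > 0\<close> by (simp_all add: power_mult_distrib flip: distrib_left)
  have "((\<lambda>s. (X s)\<^sup>2 + (Y s)\<^sup>2) has_real_derivative 2 * X t * X' + 2 * Y t * Y') (at t)"
    by (intro derivative_eq_intros) (auto intro: dX dY)
  from DERIV_chain2[OF DERIV_real_sqrt[OF pos] this]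
  have dnorm: "((\<lambda>s. sqrt ((X s)\<^sup>2 + (Y s)\<^sup>2)) has_real_derivative (X t * X' + Y t * Y') / R) (at t)"
    by (rule DERIV_cong) (use \<open>R > 0\<close> in \<open>simp add: normt field_simps\<close>)
  have "(X t * X' + Y t * Y') / R = cos \<phi> * X' + sin \<phi> * Y'"
    using \<open>R > 0\<close> unfolding XYt by (simp add: field_simps)
  also have "\<dots> = - (\<Sum>j<N. d j * sin (\<Theta> t j - \<phi>)) / N"
    unfolding X'_def Y'_def
    by (simp add: sin_diff algebra_simps sum_distrib_left sum_subtractf sum_negf
        flip: add_divide_distrib)
  finally show ?thesis using dnorm
    by (simp add: order_R_def norm_complex_def X_def Y_def)
qed

lemma kuramoto_order_R_has_real_derivative:
  assumes "N > 0" and "kuramoto_solution N \<nu> \<kappa> \<Theta>"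
    and polar: "order_param N (\<Theta> t) = complex_of_real R * cis \<phi>" and "R > 0"
  shows "((\<lambda>s. order_R N (\<Theta> s)) has_real_derivative
      \<kappa> * R * ((\<Sum>j<N. (sin (\<Theta> t j - \<phi>))\<^sup>2) / N) - (\<Sum>j<N. \<nu> j * sin (\<Theta> t j - \<phi>)) / N)
      (at t)"
proof -
  define \<sigma> where "\<sigma> j = sin (\<Theta> t j - \<phi>)" for j
  have velocity: "((\<lambda>s. \<Theta> s j) has_real_derivative \<nu> j - \<kappa> * R * \<sigma> j) (at t)" if "j < N" for j
  proof -
    have "sin (\<phi> - \<Theta> t j) = - \<sigma> j"
      by (simp add: \<sigma>_def sin_diff)
    then have "(\<Sum>k<N. sin (\<Theta> t k - \<Theta> t j)) = - N * R * \<sigma> j"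
      using sum_sin_diff_order_phase[OF \<open>N > 0\<close> polar, where \<psi> = "\<Theta> t j"] by simp
    moreover have "((\<lambda>s. \<Theta> s j) has_real_derivative
        \<nu> j + \<kappa> / N * (\<Sum>k<N. sin (\<Theta> t k - \<Theta> t j))) (at t)"
      using assms(2) that unfolding kuramoto_solution_def by blast
    ultimately show ?thesis
      using \<open>N > 0\<close> by (simp add: mult.assoc)
  qed
  have "- (\<Sum>j<N. (\<nu> j - \<kappa> * R * \<sigma> j) * \<sigma> j) / N
      = \<kappa> * R * ((\<Sum>j<N. (\<sigma> j)\<^sup>2) / N) - (\<Sum>j<N. \<nu> j * \<sigma> j) / N"
    using \<open>N > 0\<close> by (simp add: field_simps sum_subtractf sum_distrib_left power2_eq_square)
  with order_R_has_real_derivative[OF \<open>N > 0\<close> velocity polar \<open>R > 0\<close>] show ?thesis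
    unfolding \<sigma>_def by simp
qed

lemma mean_freq_mult_le_freq_diam:
  assumes "N > 0" and "(\<Sum>j<N. \<sigma> j) = 0"
  shows "(\<Sum>j<N. \<nu> j * \<sigma> j) / N \<le> freq_diam N \<nu> / 2 * sqrt ((\<Sum>j<N. (\<sigma> j)\<^sup>2) / N)"
proof -
  define D where "D = freq_diam N \<nu>"
  obtain m where centered: "\<And>j. j < N \<Longrightarrow> \<bar>\<nu> j - m\<bar> \<le> D / 2"
    using freq_diam_centered[OF \<open>N > 0\<close>] unfolding D_def by blast
  have "D \<ge> 0"
    using centered[OF \<open>N > 0\<close>] abs_ge_zero[of "\<nu> 0 - m"] by linarith
  from assms(2) have "(\<Sum>j<N. \<nu> j * \<sigma> j) \<le> D / 2 * (\<Sum>j<N. \<bar>\<sigma> j\<bar>)"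
    by (rule sum_mult_le_of_sum_eq_0[where m = m]) (metis centered lessThan_iff)
  then have "(\<Sum>j<N. \<nu> j * \<sigma> j) / N \<le> D / 2 * ((\<Sum>j<N. \<bar>\<sigma> j\<bar>) / N)"
    by (metis divide_right_mono of_nat_0_le_iff times_divide_eq_right)
  also have "\<dots> \<le> D / 2 * sqrt ((\<Sum>j<N. (\<sigma> j)\<^sup>2) / N)"
    using mean_abs_le_root_mean_square[of "{..<N}" \<sigma>] \<open>N > 0\<close> \<open>D \<ge> 0\<close>
    by (intro mult_left_mono) (simp_all add: lessThan_empty_iff)
  finally show ?thesis unfolding D_def .
qed

theorem lemma2p1:
  fixes N :: nat and \<nu> :: "nat \<Rightarrow> real" and \<kappa> :: real
    and \<Theta> :: "real \<Rightarrow> nat \<Rightarrow> real" and I :: "real set" and \<phi> :: "real \<Rightarrow> real"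
  assumes "N \<ge> 2" and "\<kappa> > 0"
    and "kuramoto_solution N \<nu> \<kappa> \<Theta>"
    and "is_interval I"
    and "\<forall>t\<in>I. order_R N (\<Theta> t) > 0"
    and "continuous_on I \<phi>"
    and "\<forall>t\<in>I. order_param N (\<Theta> t) = complex_of_real (order_R N (\<Theta> t)) * cis (\<phi> t)"
    and "t \<in> I"
  shows "deriv (\<lambda>s. order_R N (\<Theta> s)) t \<ge>
     \<kappa> * sqrt ((1 / real N) * (\<Sum>k<N. (sin (\<Theta> t k - \<phi> t))\<^sup>2)) *
       (order_R N (\<Theta> t) * sqrt ((1 / real N) * (\<Sum>k<N. (sin (\<Theta> t k - \<phi> t))\<^sup>2))
        - freq_diam N \<nu> / (2 * \<kappa>))"
proof -
  define R where "R = order_R N (\<Theta> t)"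
  define D where "D = freq_diam N \<nu>"
  define \<Delta> where "\<Delta> = (1 / real N) * (\<Sum>k<N. (sin (\<Theta> t k - \<phi> t))\<^sup>2)"
  have "N > 0" using \<open>N \<ge> 2\<close> by simp
  have "R > 0" and polar: "order_param N (\<Theta> t) = complex_of_real R * cis (\<phi> t)"
    using assms(5,7,8) by (simp_all add: R_def)
  have "deriv (\<lambda>s. order_R N (\<Theta> s)) t = \<kappa> * R * \<Delta> - (\<Sum>j<N. \<nu> j * sin (\<Theta> t j - \<phi> t)) / N"
    using kuramoto_order_R_has_real_derivative[OF \<open>N > 0\<close> assms(3) polar \<open>R > 0\<close>]
    by (simp add: DERIV_imp_deriv \<Delta>_def)
  moreover have "(\<Sum>j<N. \<nu> j * sin (\<Theta> t j - \<phi> t)) / N \<le> D / 2 * sqrt \<Delta>"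
    using mean_freq_mult_le_freq_diam[OF \<open>N > 0\<close>] sum_sin_diff_order_phase[OF \<open>N > 0\<close> polar]
    by (simp add: D_def \<Delta>_def)
  moreover have "\<kappa> * sqrt \<Delta> * (R * sqrt \<Delta> - D / (2 * \<kappa>)) = \<kappa> * R * \<Delta> - D / 2 * sqrt \<Delta>"
    using \<open>\<kappa> > 0\<close> by (simp add: \<Delta>_def field_simps sum_nonneg flip: power2_eq_square)
  ultimately show ?thesis
    unfolding \<Delta>_def R_def D_def by linarith
qed

end
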